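(* Assume the Lipschitz gradient assumption, $r_1>L_x$, and $r_2>(\frac{L_y}{r_1-L_x}+2)L_y$. Then for all $x,x'\in\mathcal X$, $y,y'\in\mathcal Y$, $z,z'\in\mathbb R^n$, $v,v'\in\mathbb R^d$: (i) $\|x(y',z,v)-x(y,z,v)\|\le\sigma_1\|y'-y\|$; (ii) $\|x(y,z',v)-x(y,z,v)\|\le\sigma_2\|z-z'\|$; (iii) $\|x(z',v)-x(z,v)\|\le\sigma_2\|z-z'\|$; (iv) $\|y(z,v)-y(z',v)\|\le\sigma_3\|z-z'\|$; (v) $\|y(x,z,v)-y(x',z,v)\|\le\sigma_4\|x-x'\|$; (vi) $\|y(x,z,v)-y(x,z,v')\|\le\sigma_5\|v-v'\|$; (vii) $\|y(z,v)-y(z,v')\|\le\sigma_5\|v-v'\|$, where $\sigma_1=\frac{L_y+r_1-L_x}{r_1-L_x}$, $\sigma_2=\frac{r_1}{r_1-L_x}$, $\sigma_3=\frac{r_1\sigma_1}{r_2-L_y}+\frac{\sigma_2}{\sigma_1}$, $\sigma_4=\frac{L_x+r_2-L_y}{r_2-L_y}$, $\sigma_5=\frac{r_2}{r_2-L_y}$.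
   Context: Let $\mathcal X\subset\mathbb R^n$, $\mathcal Y\subset\mathbb R^d$ be nonempty convex compact sets and $f:\mathbb R^n\times\mathbb R^d\to\mathbb R$ continuously differentiable. Lipschitz gradient assumption: there are $L_x,L_y>0$ such that for all $x,x'\in\mathcal X$, $y,y'\in\mathcal Y$, $\|\nabla_x f(x,y)-\nabla_x f(x',y')\|\le L_x(\|x-x'\|+\|y-y'\|)$ and $\|\nabla_y f(x,y)-\nabla_y f(x',y')\|\le L_y(\|x-x'\|+\|y-y'\|)$. $F(x,y,z,v)=f(x,y)+\frac{r_1}{2}\|x-z\|^2-\frac{r_2}{2}\|y-v\|^2$. For $z\in\mathbb R^n$, $v\in\mathbb R^d$: $d(y,z,v)=\min_{x\in\mathcal X}F(x,y,z,v)$ with unique minimizer $x(y,z,v)$; $h(x,z,v)=\max_{y\in\mathcal Y}F(x,y,z,v)$ with unique maximizer $y(x,z,v)$; $x(z,v)=\arg\min_{x\in\mathcal X}h(x,z,v)$; $y(z,v)=\arg\max_{y\in\mathcal Y}d(y,z,v)$. *)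

theory Defs
  imports "HOL-Analysis.Analysis"
begin

definition Fpx :: "('n::euclidean_space \<Rightarrow> 'd::euclidean_space \<Rightarrow> real) \<Rightarrow> real \<Rightarrow> real
    \<Rightarrow> 'n \<Rightarrow> 'd \<Rightarrow> 'n \<Rightarrow> 'd \<Rightarrow> real" where
  "Fpx f r1 r2 x y z v = f x y + r1 / 2 * (norm (x - z))^2 - r2 / 2 * (norm (y - v))^2"

definition dfun :: "'n::euclidean_space set \<Rightarrow> ('n \<Rightarrow> 'd::euclidean_space \<Rightarrow> real) \<Rightarrow> real \<Rightarrow> real
    \<Rightarrow> 'd \<Rightarrow> 'n \<Rightarrow> 'd \<Rightarrow> real" where
  "dfun X f r1 r2 y z v = Inf ((\<lambda>x. Fpx f r1 r2 x y z v) ` X)"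

definition hfun :: "'d::euclidean_space set \<Rightarrow> ('n::euclidean_space \<Rightarrow> 'd \<Rightarrow> real) \<Rightarrow> real \<Rightarrow> real
    \<Rightarrow> 'n \<Rightarrow> 'n \<Rightarrow> 'd \<Rightarrow> real" where
  "hfun Y f r1 r2 x z v = Sup ((\<lambda>y. Fpx f r1 r2 x y z v) ` Y)"

definition xyzv :: "'n::euclidean_space set \<Rightarrow> ('n \<Rightarrow> 'd::euclidean_space \<Rightarrow> real) \<Rightarrow> real \<Rightarrow> real
    \<Rightarrow> 'd \<Rightarrow> 'n \<Rightarrow> 'd \<Rightarrow> 'n" where
  "xyzv X f r1 r2 y z v =
     (THE x. x \<in> X \<and> (\<forall>x'\<in>X. Fpx f r1 r2 x y z v \<le> Fpx f r1 r2 x' y z v))"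

definition yxzv :: "'d::euclidean_space set \<Rightarrow> ('n::euclidean_space \<Rightarrow> 'd \<Rightarrow> real) \<Rightarrow> real \<Rightarrow> real
    \<Rightarrow> 'n \<Rightarrow> 'n \<Rightarrow> 'd \<Rightarrow> 'd" where
  "yxzv Y f r1 r2 x z v =
     (THE y. y \<in> Y \<and> (\<forall>y'\<in>Y. Fpx f r1 r2 x y' z v \<le> Fpx f r1 r2 x y z v))"

definition xzv :: "'n::euclidean_space set \<Rightarrow> 'd::euclidean_space set \<Rightarrow> ('n \<Rightarrow> 'd \<Rightarrow> real)
    \<Rightarrow> real \<Rightarrow> real \<Rightarrow> 'n \<Rightarrow> 'd \<Rightarrow> 'n" where
  "xzv X Y f r1 r2 z v =
     (THE x. x \<in> X \<and> (\<forall>x'\<in>X. hfun Y f r1 r2 x z v \<le> hfun Y f r1 r2 x' z v))"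

definition yzv :: "'n::euclidean_space set \<Rightarrow> 'd::euclidean_space set \<Rightarrow> ('n \<Rightarrow> 'd \<Rightarrow> real)
    \<Rightarrow> real \<Rightarrow> real \<Rightarrow> 'n \<Rightarrow> 'd \<Rightarrow> 'd" where
  "yzv X Y f r1 r2 z v =
     (THE y. y \<in> Y \<and> (\<forall>y'\<in>Y. dfun X f r1 r2 y' z v \<le> dfun X f r1 r2 y z v))"

end

theory Submission
  imports Defs
begin

text \<open>For fixed parameters, \<open>F\<close> is \<open>(r1 - Lx)\<close>-strongly convex in \<open>x\<close> and \<open>(r2 - Ly)\<close>-strongly
concave in \<open>y\<close>, and strong convexity survives taking suprema, so \<open>h\<close> and \<open>-d\<close> are strongly convex
as well. If \<open>u1\<close>, \<open>u2\<close> minimize two \<open>\<mu>\<close>-strongly convex functions \<open>\<psi>1\<close>, \<open>\<psi>2\<close>, adding the two quadratic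
growth inequalities gives \<open>\<mu> |u1 - u2|\<^sup>2 \<le> \<phi> u2 - \<phi> u1\<close> with \<open>\<phi> = \<psi>1 - \<psi>2\<close>. When \<open>\<psi>1\<close> and \<open>\<psi>2\<close> differ
in one parameter, the increment of \<open>\<phi>\<close> is controlled by the mixed difference of \<open>f\<close> (through the
Lipschitz gradient) and by the cross terms of the proximal squares; this gives (i)-(iii) and
(v)-(vii). For (iv) the same argument leaves a factor \<open>|x(y1,z',v) - x(y2,z,v)|\<close>, which (i) and (ii)
bound linearly in \<open>|y1 - y2|\<close> and \<open>|z - z'|\<close>; solving the resulting quadratic inequality gives \<open>\<sigma>3\<close>.\<close>

lemma mult_le_of_mult_square_le:
  fixes t \<mu> c :: real
  assumes "0 \<le> t" "\<mu> * t\<^sup>2 \<le> c * t" "0 \<le> c"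
  shows "\<mu> * t \<le> c"
proof (cases "t = 0")
  case False
  with assms(1) have "0 < t" by simp
  moreover have "(\<mu> * t) * t \<le> c * t" using assms(2) by (simp add: power2_eq_square mult.assoc)
  ultimately show ?thesis by (rule mult_right_le_imp_le[rotated])
qed (use assms in simp)

lemma quadratic_le_imp_le:
  fixes t \<delta> A C :: real
  assumes "0 \<le> t" "0 \<le> \<delta>" "0 \<le> A" "0 \<le> C" and quadratic: "t\<^sup>2 \<le> A * t * \<delta> + A * C * \<delta>\<^sup>2"
  shows "t \<le> (A + C) * \<delta>"
proof -
  have "(t - (A + C) * \<delta>) * (t + C * \<delta>) = t\<^sup>2 - (A * t * \<delta> + A * C * \<delta>\<^sup>2) - (C * \<delta>)\<^sup>2"
    by (simp add: power2_eq_square algebra_simps)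
  also have "\<dots> \<le> 0" using quadratic zero_le_power2[of "C * \<delta>"] by linarith
  finally have "(t - (A + C) * \<delta>) * (t + C * \<delta>) \<le> 0" .
  moreover have "0 \<le> t + C * \<delta>" using assms by simp
  ultimately show ?thesis
    using assms by (cases "t + C * \<delta> = 0") (auto simp: mult_le_0_iff add_nonneg_eq_0_iff)
qed

lemma le_divide_mult_of_mult_le:
  fixes c N K M n :: real
  assumes "0 < c" "c * N \<le> K * n" "K \<le> M" "0 \<le> n"
  shows "N \<le> M / c * n"
proof -
  have "c * N \<le> M * n" using assms(2-4) mult_right_mono[of K M n] by linarith
  then show ?thesis using assms(1) by (simp add: field_simps)
qed

lemma norm_square_cross_difference_le:
  fixes p q z z' :: "'a::real_inner"
  shows "((norm (p - z))\<^sup>2 - (norm (p - z'))\<^sup>2) - ((norm (q - z))\<^sup>2 - (norm (q - z'))\<^sup>2)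
    \<le> 2 * norm (p - q) * norm (z - z')"
proof -
  have "((norm (p - z))\<^sup>2 - (norm (p - z'))\<^sup>2) - ((norm (q - z))\<^sup>2 - (norm (q - z'))\<^sup>2)
      = 2 * ((p - q) \<bullet> (z' - z))"
    unfolding power2_norm_eq_inner
    by (simp add: inner_diff_left inner_diff_right inner_commute algebra_simps)
  also have "\<dots> \<le> 2 * (norm (p - q) * norm (z' - z))"
    using Cauchy_Schwarz_ineq2[of "p - q" "z' - z"] by simp
  finally show ?thesis by (simp add: norm_minus_commute)
qed

lemma norm_square_convex_combination:
  fixes a b z :: "'a::real_inner"
  shows "(norm ((1 - t) *\<^sub>R a + t *\<^sub>R b - z))\<^sup>2 =
    (1 - t) * (norm (a - z))\<^sup>2 + t * (norm (b - z))\<^sup>2 - t * (1 - t) * (norm (a - b))\<^sup>2"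
proof -
  have "(1 - t) *\<^sub>R a + t *\<^sub>R b - z = (1 - t) *\<^sub>R (a - z) + t *\<^sub>R (b - z)" and "a - b = (a - z) - (b - z)"
    by (simp_all add: algebra_simps)
  then show ?thesis
    unfolding power2_norm_eq_inner
    by (simp add: inner_add_left inner_add_right inner_diff_left inner_diff_right
        inner_commute[of "b - z" "a - z"] algebra_simps)
qed

lemma le_chord_plus_quadratic_of_derivative:
  fixes \<phi> \<phi>' :: "real \<Rightarrow> real"
  assumes deriv: "\<And>t. (\<phi> has_real_derivative \<phi>' t) (at t)"
    and decrease: "\<And>s t. 0 \<le> s \<Longrightarrow> s \<le> t \<Longrightarrow> t \<le> 1 \<Longrightarrow> \<phi>' s - \<phi>' t \<le> L * (t - s)"
    and t: "0 \<le> t" "t \<le> 1"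
  shows "\<phi> t \<le> (1 - t) * \<phi> 0 + t * \<phi> 1 + L / 2 * t * (1 - t)"
proof -
  have "convex_on {0..1} (\<lambda>s. \<phi> s + L / 2 * s\<^sup>2)"
  proof (rule convex_on_realI[where f'="\<lambda>s. \<phi>' s + L * s"])
    show "((\<lambda>s. \<phi> s + L / 2 * s\<^sup>2) has_real_derivative \<phi>' s + L * s) (at s)" for s
      using deriv[of s] by (auto intro!: derivative_eq_intros)
    show "\<phi>' s + L * s \<le> \<phi>' u + L * u" if "s \<in> {0..1}" "u \<in> {0..1}" "s \<le> u" for s u
      using decrease[of s u] that by (auto simp: algebra_simps)
  qed simp
  from convex_onD[OF this, of t 0 1] t
  have "\<phi> t + L / 2 * t\<^sup>2 \<le> (1 - t) * \<phi> 0 + t * (\<phi> 1 + L / 2)" by simp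
  then show ?thesis by (simp add: power2_eq_square field_simps)
qed

text \<open>A negative modulus \<open>\<mu>\<close> is allowed: then \<open>\<psi>\<close> is \<open>(-\<mu>)\<close>-weakly convex.\<close>
definition strongly_convex_on :: "'a::real_inner set \<Rightarrow> real \<Rightarrow> ('a \<Rightarrow> real) \<Rightarrow> bool" where
  "strongly_convex_on K \<mu> \<psi> \<longleftrightarrow> (\<forall>a\<in>K. \<forall>b\<in>K. \<forall>t\<in>{0..1}.
     \<psi> ((1 - t) *\<^sub>R a + t *\<^sub>R b) \<le> (1 - t) * \<psi> a + t * \<psi> b - \<mu> / 2 * t * (1 - t) * (norm (a - b))\<^sup>2)"

lemma strongly_convex_onD:
  "strongly_convex_on K \<mu> \<psi> \<Longrightarrow> a \<in> K \<Longrightarrow> b \<in> K \<Longrightarrow> 0 \<le> t \<Longrightarrow> t \<le> 1 \<Longrightarrow>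
     \<psi> ((1 - t) *\<^sub>R a + t *\<^sub>R b) \<le> (1 - t) * \<psi> a + t * \<psi> b - \<mu> / 2 * t * (1 - t) * (norm (a - b))\<^sup>2"
  unfolding strongly_convex_on_def by auto

lemma strongly_convex_on_norm_square: "strongly_convex_on K c (\<lambda>x. c / 2 * (norm (x - z))\<^sup>2)"
  unfolding strongly_convex_on_def norm_square_convex_combination by (simp add: field_simps)

lemma strongly_convex_on_add:
  assumes "strongly_convex_on K \<mu>1 \<psi>1" "strongly_convex_on K \<mu>2 \<psi>2"
  shows "strongly_convex_on K (\<mu>1 + \<mu>2) (\<lambda>x. \<psi>1 x + \<psi>2 x)"
  unfolding strongly_convex_on_def
proof (intro ballI)
  fix a b t assume "a \<in> K" "b \<in> K" "t \<in> {0..1::real}"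
  with assms[THEN strongly_convex_onD, of a b t] show
    "\<psi>1 ((1 - t) *\<^sub>R a + t *\<^sub>R b) + \<psi>2 ((1 - t) *\<^sub>R a + t *\<^sub>R b)
       \<le> (1 - t) * (\<psi>1 a + \<psi>2 a) + t * (\<psi>1 b + \<psi>2 b) - (\<mu>1 + \<mu>2) / 2 * t * (1 - t) * (norm (a - b))\<^sup>2"
    by (simp add: algebra_simps add_divide_distrib)
qed

lemma strongly_convex_on_add_const:
  "strongly_convex_on K \<mu> \<psi> \<Longrightarrow> strongly_convex_on K \<mu> (\<lambda>x. \<psi> x + c)"
  unfolding strongly_convex_on_def by (auto simp: algebra_simps)

lemma strongly_convex_on_cong:
  assumes "strongly_convex_on K \<mu> \<psi>" "convex K" "\<And>x. x \<in> K \<Longrightarrow> \<psi> x = \<phi> x"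
  shows "strongly_convex_on K \<mu> \<phi>"
  using assms unfolding strongly_convex_on_def convex_alt by (metis atLeastAtMost_iff)

lemma strongly_convex_on_SUP:
  assumes K: "convex K" and B: "B \<noteq> {}"
    and sc: "\<And>b. b \<in> B \<Longrightarrow> strongly_convex_on K \<mu> (\<lambda>a. G a b)"
    and bdd: "\<And>a. a \<in> K \<Longrightarrow> bdd_above ((\<lambda>b. G a b) ` B)"
  shows "strongly_convex_on K \<mu> (\<lambda>a. SUP b\<in>B. G a b)"
  unfolding strongly_convex_on_def
proof (intro ballI)
  fix a c t assume ac: "a \<in> K" "c \<in> K" and t: "t \<in> {0..1::real}"
  show "(SUP b\<in>B. G ((1 - t) *\<^sub>R a + t *\<^sub>R c) b)
     \<le> (1 - t) * (SUP b\<in>B. G a b) + t * (SUP b\<in>B. G c b) - \<mu> / 2 * t * (1 - t) * (norm (a - c))\<^sup>2"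
  proof (rule cSUP_least[OF B])
    fix b assume b: "b \<in> B"
    have "G ((1 - t) *\<^sub>R a + t *\<^sub>R c) b \<le> (1 - t) * G a b + t * G c b - \<mu> / 2 * t * (1 - t) * (norm (a - c))\<^sup>2"
      using strongly_convex_onD[OF sc[OF b] ac] t by auto
    also have "\<dots> \<le> (1 - t) * (SUP b\<in>B. G a b) + t * (SUP b\<in>B. G c b) - \<mu> / 2 * t * (1 - t) * (norm (a - c))\<^sup>2"
      using t cSUP_upper[OF b bdd[OF ac(1)]] cSUP_upper[OF b bdd[OF ac(2)]]
      by (intro diff_right_mono add_mono mult_left_mono) auto
    finally show "G ((1 - t) *\<^sub>R a + t *\<^sub>R c) b \<le> \<dots>" .
  qed
qed

lemma strongly_convex_on_of_gradient:
  fixes \<phi> :: "'a::real_inner \<Rightarrow> real"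
  assumes K: "convex K"
    and deriv: "\<And>a e t. ((\<lambda>t. \<phi> (a + t *\<^sub>R e)) has_real_derivative (G (a + t *\<^sub>R e) \<bullet> e)) (at t)"
    and mono: "\<And>a b. a \<in> K \<Longrightarrow> b \<in> K \<Longrightarrow> (G a - G b) \<bullet> (a - b) \<ge> - L * (norm (a - b))\<^sup>2"
  shows "strongly_convex_on K (- L) \<phi>"
  unfolding strongly_convex_on_def
proof (intro ballI)
  fix a b t assume ab: "a \<in> K" "b \<in> K" and t: "t \<in> {0..1::real}"
  define e where "e = b - a"
  have line: "a + s *\<^sub>R e = (1 - s) *\<^sub>R a + s *\<^sub>R b" for s
    by (simp add: e_def algebra_simps)
  have "\<phi> (a + t *\<^sub>R e) \<le> (1 - t) * \<phi> (a + 0 *\<^sub>R e) + t * \<phi> (a + 1 *\<^sub>R e) + L * (norm e)\<^sup>2 / 2 * t * (1 - t)"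
  proof (rule le_chord_plus_quadratic_of_derivative[where \<phi>="\<lambda>t. \<phi> (a + t *\<^sub>R e)", OF deriv])
    fix s u :: real assume su: "0 \<le> s" "s \<le> u" "u \<le> 1"
    have in_K: "a + s *\<^sub>R e \<in> K" "a + u *\<^sub>R e \<in> K"
      using su ab K unfolding line by (auto simp: convex_alt)
    have "- L * (norm ((u - s) *\<^sub>R e))\<^sup>2 \<le> (G (a + u *\<^sub>R e) - G (a + s *\<^sub>R e)) \<bullet> ((u - s) *\<^sub>R e)"
      using mono[OF in_K(2,1)] by (simp add: scaleR_diff_left[symmetric])
    then have "(u - s) * (- L * (u - s) * (norm e)\<^sup>2) \<le> (u - s) * ((G (a + u *\<^sub>R e) - G (a + s *\<^sub>R e)) \<bullet> e)"
      using su by (simp add: power_mult_distrib power2_eq_square mult_ac)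
    then have "- L * (u - s) * (norm e)\<^sup>2 \<le> (G (a + u *\<^sub>R e) - G (a + s *\<^sub>R e)) \<bullet> e" if "s < u"
      using that by (metis diff_gt_0_iff_gt mult_le_cancel_left_pos)
    then show "G (a + s *\<^sub>R e) \<bullet> e - G (a + u *\<^sub>R e) \<bullet> e \<le> L * (norm e)\<^sup>2 * (u - s)"
      using su by (cases "s = u") (auto simp: algebra_simps inner_diff_left)
  qed (use t in auto)
  moreover have "norm e = norm (a - b)" "a + e = b"
    by (simp_all add: e_def norm_minus_commute)
  ultimately show "\<phi> ((1 - t) *\<^sub>R a + t *\<^sub>R b) \<le> (1 - t) * \<phi> a + t * \<phi> b - - L / 2 * t * (1 - t) * (norm (a - b))\<^sup>2"
    by (simp add: line mult_ac)
qed

lemma strongly_convex_on_growth_at_min: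
  assumes sc: "strongly_convex_on K \<mu> \<psi>" and K: "convex K" and u: "u1 \<in> K" "u2 \<in> K"
    and min: "\<forall>u\<in>K. \<psi> u1 \<le> \<psi> u" and \<mu>: "\<mu> \<ge> 0"
  shows "\<psi> u1 + \<mu> / 2 * (norm (u2 - u1))\<^sup>2 \<le> \<psi> u2"
proof -
  define c where "c = \<mu> / 2 * (norm (u2 - u1))\<^sup>2"
  define g where "g = \<psi> u2 - \<psi> u1"
  have along_segment: "c * (1 - t) \<le> g" if t: "0 < t" "t \<le> 1" for t
  proof -
    have "\<psi> u1 \<le> \<psi> ((1 - t) *\<^sub>R u1 + t *\<^sub>R u2)"
      using min K u t by (simp add: convex_alt)
    also have "\<dots> \<le> (1 - t) * \<psi> u1 + t * \<psi> u2 - \<mu> / 2 * t * (1 - t) * (norm (u1 - u2))\<^sup>2"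
      using strongly_convex_onD[OF sc u] t by simp
    finally have "t * (c * (1 - t)) \<le> t * g"
      by (simp add: c_def g_def algebra_simps norm_minus_commute)
    then show ?thesis using t by simp
  qed
  \<comment> \<open>Instead of letting \<open>t \<rightarrow> 0\<close>, a single \<open>t\<close> chosen from \<open>c\<close> and \<open>g\<close> gives the contradiction.\<close>
  have "c \<le> g"
  proof (rule ccontr)
    assume "\<not> c \<le> g"
    moreover have "0 \<le> g" using along_segment[of 1] by simp
    ultimately have "0 < (c - g) / (2 * c)" "(c - g) / (2 * c) \<le> 1" "c * (1 - (c - g) / (2 * c)) = (c + g) / 2"
      by (auto simp: field_simps)
    with along_segment[of "(c - g) / (2 * c)"] \<open>\<not> c \<le> g\<close> show False by simp
  qed
  then show ?thesis by (simp add: c_def g_def)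
qed

lemma strongly_convex_on_the_argmin:
  assumes K: "compact K" "K \<noteq> {}" "convex K" and cont: "continuous_on K \<psi>"
    and sc: "strongly_convex_on K \<mu> \<psi>" and \<mu>: "\<mu> > 0"
  shows "(THE u. u \<in> K \<and> (\<forall>u'\<in>K. \<psi> u \<le> \<psi> u')) \<in> K \<and>
         (\<forall>u'\<in>K. \<psi> (THE u. u \<in> K \<and> (\<forall>u'\<in>K. \<psi> u \<le> \<psi> u')) \<le> \<psi> u')"
proof -
  obtain u where u: "u \<in> K" "\<forall>u'\<in>K. \<psi> u \<le> \<psi> u'"
    using continuous_attains_inf[OF K(1,2) cont] by blast
  show ?thesis
  proof (rule theI)
    show "u \<in> K \<and> (\<forall>u'\<in>K. \<psi> u \<le> \<psi> u')" using u ..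
    fix w assume w: "w \<in> K \<and> (\<forall>u'\<in>K. \<psi> w \<le> \<psi> u')"
    have "\<psi> u + \<mu> / 2 * (norm (w - u))\<^sup>2 \<le> \<psi> w"
      using strongly_convex_on_growth_at_min[OF sc K(3) u(1) conjunct1[OF w] u(2)] \<mu> by simp
    moreover have "\<psi> w \<le> \<psi> u" using w u(1) by blast
    ultimately have "\<mu> * (norm (w - u))\<^sup>2 \<le> 0" by simp
    then show "w = u" using \<mu> by (simp add: mult_le_0_iff)
  qed
qed

lemma strongly_convex_on_argmin_dist_square:
  assumes sc: "strongly_convex_on K \<mu> \<psi>1" "strongly_convex_on K \<mu> \<psi>2" and K: "convex K" and \<mu>: "\<mu> \<ge> 0"
    and u: "u1 \<in> K" "u2 \<in> K"
    and min: "\<forall>u\<in>K. \<psi>1 u1 \<le> \<psi>1 u" "\<forall>u\<in>K. \<psi>2 u2 \<le> \<psi>2 u"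
  shows "\<mu> * (norm (u1 - u2))\<^sup>2 \<le> (\<psi>1 u2 - \<psi>2 u2) - (\<psi>1 u1 - \<psi>2 u1)"
proof -
  have "\<psi>1 u1 + \<mu> / 2 * (norm (u1 - u2))\<^sup>2 \<le> \<psi>1 u2"
    using strongly_convex_on_growth_at_min[OF sc(1) K u min(1) \<mu>] by (simp add: norm_minus_commute)
  moreover have "\<psi>2 u2 + \<mu> / 2 * (norm (u1 - u2))\<^sup>2 \<le> \<psi>2 u1"
    using strongly_convex_on_growth_at_min[OF sc(2) K u(2,1) min(2) \<mu>] .
  ultimately show ?thesis by linarith
qed

lemma strongly_convex_on_argmin_dist:
  assumes sc: "strongly_convex_on K \<mu> \<psi>1" "strongly_convex_on K \<mu> \<psi>2" and K: "convex K" and \<mu>: "\<mu> \<ge> 0"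
    and u: "u1 \<in> K" "u2 \<in> K"
    and min: "\<forall>u\<in>K. \<psi>1 u1 \<le> \<psi>1 u" "\<forall>u\<in>K. \<psi>2 u2 \<le> \<psi>2 u"
    and increment: "(\<psi>1 u2 - \<psi>2 u2) - (\<psi>1 u1 - \<psi>2 u1) \<le> c * norm (u1 - u2)" and c: "0 \<le> c"
  shows "\<mu> * norm (u1 - u2) \<le> c"
proof (rule mult_le_of_mult_square_le[OF norm_ge_zero _ c])
  show "\<mu> * (norm (u1 - u2))\<^sup>2 \<le> c * norm (u1 - u2)"
    using strongly_convex_on_argmin_dist_square[OF sc K \<mu> u min] increment by linarith
qed

lemma bdd_image_compact:
  fixes g :: "'a::topological_space \<Rightarrow> real"
  assumes "compact B" "continuous_on B g"
  shows "bdd_above (g ` B)" "bdd_below (g ` B)"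
  using compact_imp_bounded[OF compact_continuous_image[OF assms(2,1)]]
  by (auto intro: bounded_imp_bdd_above bounded_imp_bdd_below)

lemma continuous_on_SUP_compact:
  fixes G :: "'a::metric_space \<Rightarrow> 'b::metric_space \<Rightarrow> real"
  assumes K: "compact K" and B: "compact B" "B \<noteq> {}"
    and cont: "continuous_on (K \<times> B) (\<lambda>p. G (fst p) (snd p))"
  shows "continuous_on K (\<lambda>a. SUP b\<in>B. G a b)"
  unfolding continuous_on_iff
proof (intro ballI allI impI)
  fix a and e :: real assume a: "a \<in> K" and e: "e > 0"
  have bdd: "bdd_above ((\<lambda>b. G a b) ` B)" if "a \<in> K" for a
  proof (rule bdd_image_compact[OF B(1)])
    have "continuous_on B ((\<lambda>p. G (fst p) (snd p)) \<circ> Pair a)"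
      using that by (intro continuous_on_compose continuous_on_subset[OF cont]) (auto intro: continuous_intros)
    then show "continuous_on B (\<lambda>b. G a b)" by (simp add: o_def)
  qed
  obtain d where d: "d > 0" and close: "\<And>p p'. p \<in> K \<times> B \<Longrightarrow> p' \<in> K \<times> B \<Longrightarrow> dist p' p < d \<Longrightarrow>
      dist (G (fst p') (snd p')) (G (fst p) (snd p)) < e / 2"
    using compact_uniformly_continuous[OF cont compact_Times[OF K B(1)]] e
    unfolding uniformly_continuous_on_def by (metis half_gt_zero)
  have "dist (SUP b\<in>B. G a' b) (SUP b\<in>B. G a b) < e" if a': "a' \<in> K" "dist a' a < d" for a'
  proof -
    have SUP_le: "(SUP b\<in>B. G c b) \<le> (SUP b\<in>B. G c' b) + e / 2"
      if "c \<in> K" "c' \<in> K" "dist c c' < d" for c c'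
    proof (rule cSUP_least[OF B(2)])
      fix b assume b: "b \<in> B"
      have "dist (G c b) (G c' b) < e / 2"
        using close[of "(c', b)" "(c, b)"] that b by (simp add: dist_Pair_Pair)
      moreover have "G c' b \<le> (SUP b\<in>B. G c' b)" by (rule cSUP_upper[OF b bdd[OF that(2)]])
      ultimately show "G c b \<le> (SUP b\<in>B. G c' b) + e / 2" unfolding dist_real_def by arith
    qed
    show ?thesis
      using SUP_le[OF a'(1) a a'(2)] SUP_le[OF a a'(1)] a'(2) e
      by (simp add: dist_real_def dist_commute abs_le_iff)
  qed
  with d show "\<exists>d>0. \<forall>a'\<in>K. dist a' a < d \<longrightarrow> dist (SUP b\<in>B. G a' b) (SUP b\<in>B. G a b) < e"
    by blast
qed

lemma has_real_derivative_along_line: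
  fixes f :: "'n::real_inner \<Rightarrow> 'd::real_inner \<Rightarrow> real"
  assumes deriv: "\<And>a b. ((\<lambda>p. f (fst p) (snd p)) has_derivative
                   (\<lambda>p. gx a b \<bullet> fst p + gy a b \<bullet> snd p)) (at (a, b))"
  shows "((\<lambda>t. f (p + t *\<^sub>R u) (q + t *\<^sub>R w)) has_real_derivative
     (gx (p + t *\<^sub>R u) (q + t *\<^sub>R w) \<bullet> u + gy (p + t *\<^sub>R u) (q + t *\<^sub>R w) \<bullet> w)) (at t)"
proof -
  let ?p = "p + t *\<^sub>R u" and ?q = "q + t *\<^sub>R w"
  have line: "((\<lambda>t. (p + t *\<^sub>R u, q + t *\<^sub>R w)) has_derivative (\<lambda>h. (h *\<^sub>R u, h *\<^sub>R w))) (at t)"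
    by (auto intro!: derivative_eq_intros)
  have "((\<lambda>t. (\<lambda>p. f (fst p) (snd p)) (p + t *\<^sub>R u, q + t *\<^sub>R w)) has_derivative
      (\<lambda>h. gx ?p ?q \<bullet> fst (h *\<^sub>R u, h *\<^sub>R w) + gy ?p ?q \<bullet> snd (h *\<^sub>R u, h *\<^sub>R w))) (at t)"
    by (rule has_derivative_compose[OF line deriv])
  moreover have "(\<lambda>h. gx ?p ?q \<bullet> fst (h *\<^sub>R u, h *\<^sub>R w) + gy ?p ?q \<bullet> snd (h *\<^sub>R u, h *\<^sub>R w))
      = (*) (gx ?p ?q \<bullet> u + gy ?p ?q \<bullet> w)"
    by (auto simp: fun_eq_iff algebra_simps)
  ultimately show ?thesis unfolding has_field_derivative_def by simp
qed

text \<open>Of \<open>r2\<close> only \<open>2 Ly < r2\<close> is assumed, which follows from the hypothesis of the theorem: it gives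
\<open>Ly < r2\<close> and also \<open>Ly \<le> Lx + r2 - Ly\<close>, which the constant \<open>\<sigma>4\<close> needs.\<close>
locale proximal_minimax =
  fixes X :: "'n::euclidean_space set" and Y :: "'d::euclidean_space set"
    and f :: "'n \<Rightarrow> 'd \<Rightarrow> real"
    and gx :: "'n \<Rightarrow> 'd \<Rightarrow> 'n" and gy :: "'n \<Rightarrow> 'd \<Rightarrow> 'd"
    and Lx Ly r1 r2 :: real
  assumes X: "X \<noteq> {}" "convex X" "compact X"
    and Y: "Y \<noteq> {}" "convex Y" "compact Y"
    and deriv: "\<And>a b. ((\<lambda>p. f (fst p) (snd p)) has_derivative
                   (\<lambda>p. gx a b \<bullet> fst p + gy a b \<bullet> snd p)) (at (a, b))"
    and L_nonneg: "0 \<le> Lx" "0 \<le> Ly"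
    and Lipx: "\<And>a a' b b'. a \<in> X \<Longrightarrow> a' \<in> X \<Longrightarrow> b \<in> Y \<Longrightarrow> b' \<in> Y \<Longrightarrow>
                 norm (gx a b - gx a' b') \<le> Lx * (norm (a - a') + norm (b - b'))"
    and Lipy: "\<And>a a' b b'. a \<in> X \<Longrightarrow> a' \<in> X \<Longrightarrow> b \<in> Y \<Longrightarrow> b' \<in> Y \<Longrightarrow>
                 norm (gy a b - gy a' b') \<le> Ly * (norm (a - a') + norm (b - b'))"
    and r1: "Lx < r1" and r2: "2 * Ly < r2"
begin

lemma r2_gt_Ly: "Ly < r2"
  using r2 L_nonneg by simp

abbreviation F :: "'n \<Rightarrow> 'd \<Rightarrow> 'n \<Rightarrow> 'd \<Rightarrow> real" where
  "F \<equiv> Fpx f r1 r2"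

lemma F_continuous: "continuous_on UNIV (\<lambda>p. F (fst p) (snd p) z v)"
proof -
  have "continuous_on UNIV (\<lambda>p. f (fst p) (snd p))"
    using has_derivative_continuous[OF deriv] by (auto intro: continuous_at_imp_continuous_on)
  then show ?thesis unfolding Fpx_def by (intro continuous_intros)
qed

lemma F_continuous_on_x: "continuous_on A (\<lambda>x. F x y z v)"
  using continuous_on_compose2[OF F_continuous[of z v], of A "\<lambda>x. (x, y)"] by (simp add: continuous_intros)

lemma F_continuous_on_y: "continuous_on A (\<lambda>y. F x y z v)"
  using continuous_on_compose2[OF F_continuous[of z v], of A "\<lambda>y. (x, y)"] by (simp add: continuous_intros)

lemma mixed_difference_le:
  assumes ab: "a \<in> X" "b \<in> X" and yy': "y \<in> Y" "y' \<in> Y"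
  shows "\<bar>f b y - f a y - f b y' + f a y'\<bar> \<le> Ly * norm (b - a) * norm (y - y')"
proof -
  define e where "e = y - y'"
  define \<delta> where "\<delta> t = f b (y' + t *\<^sub>R e) - f a (y' + t *\<^sub>R e)" for t
  define \<delta>' where "\<delta>' t = (gy b (y' + t *\<^sub>R e) - gy a (y' + t *\<^sub>R e)) \<bullet> e" for t
  have "(\<delta> has_real_derivative \<delta>' t) (at t)" for t
    using DERIV_diff[OF has_real_derivative_along_line[OF deriv, of b 0 y' e t]
        has_real_derivative_along_line[OF deriv, of a 0 y' e t]]
    by (simp add: \<delta>_def[abs_def] \<delta>'_def inner_diff_left)
  then obtain \<xi> where \<xi>: "0 < \<xi>" "\<xi> < 1" and mvt: "\<delta> 1 - \<delta> 0 = \<delta>' \<xi>"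
    using MVT2[of 0 1 \<delta> \<delta>'] by auto
  have "y' + \<xi> *\<^sub>R e = (1 - \<xi>) *\<^sub>R y' + \<xi> *\<^sub>R y" by (simp add: e_def algebra_simps)
  then have in_Y: "y' + \<xi> *\<^sub>R e \<in> Y" using Y(2) yy' \<xi> by (simp add: convex_alt)
  have "\<bar>\<delta>' \<xi>\<bar> \<le> norm (gy b (y' + \<xi> *\<^sub>R e) - gy a (y' + \<xi> *\<^sub>R e)) * norm e"
    unfolding \<delta>'_def by (rule Cauchy_Schwarz_ineq2)
  also have "\<dots> \<le> Ly * norm (b - a) * norm e"
    using Lipy[OF ab(2,1) in_Y in_Y] by (simp add: mult_right_mono)
  finally show ?thesis using mvt by (simp add: \<delta>_def e_def)
qed

lemma f_weakly_convex_x: "y \<in> Y \<Longrightarrow> strongly_convex_on X (- Lx) (\<lambda>x. f x y)"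
proof (rule strongly_convex_on_of_gradient[where G="\<lambda>x. gx x y"])
  show "((\<lambda>t. f (a + t *\<^sub>R e) y) has_real_derivative gx (a + t *\<^sub>R e) y \<bullet> e) (at t)" for a e t
    using has_real_derivative_along_line[OF deriv, of a e y 0 t] by simp
  show "- Lx * (norm (a - b))\<^sup>2 \<le> (gx a y - gx b y) \<bullet> (a - b)" if "a \<in> X" "b \<in> X" "y \<in> Y" for a b
  proof -
    have "\<bar>(gx a y - gx b y) \<bullet> (a - b)\<bar> \<le> norm (gx a y - gx b y) * norm (a - b)"
      by (rule Cauchy_Schwarz_ineq2)
    also have "\<dots> \<le> Lx * (norm (a - b))\<^sup>2"
      using mult_right_mono[OF Lipx[OF that(1,2,3,3)] norm_ge_zero[of "a - b"]]
      by (simp add: power2_eq_square)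
    finally show ?thesis by simp
  qed
qed (rule X(2))

lemma f_weakly_concave_y: "x \<in> X \<Longrightarrow> strongly_convex_on Y (- Ly) (\<lambda>y. - f x y)"
proof (rule strongly_convex_on_of_gradient[where G="\<lambda>y. - gy x y"])
  show "((\<lambda>t. - f x (a + t *\<^sub>R e)) has_real_derivative - gy x (a + t *\<^sub>R e) \<bullet> e) (at t)" for a e t
    using DERIV_minus[OF has_real_derivative_along_line[OF deriv, of x 0 a e t]] by simp
  show "- Ly * (norm (a - b))\<^sup>2 \<le> (- gy x a - - gy x b) \<bullet> (a - b)" if "a \<in> Y" "b \<in> Y" "x \<in> X" for a b
  proof -
    have "\<bar>(gy x a - gy x b) \<bullet> (a - b)\<bar> \<le> norm (gy x a - gy x b) * norm (a - b)"
      by (rule Cauchy_Schwarz_ineq2)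
    also have "\<dots> \<le> Ly * (norm (a - b))\<^sup>2"
      using mult_right_mono[OF Lipy[OF that(3,3,1,2)] norm_ge_zero[of "a - b"]]
      by (simp add: power2_eq_square)
    finally show ?thesis by (simp add: inner_diff_left)
  qed
qed (rule Y(2))

lemma F_strongly_convex_x: "y \<in> Y \<Longrightarrow> strongly_convex_on X (r1 - Lx) (\<lambda>x. F x y z v)"
  using strongly_convex_on_add_const[OF strongly_convex_on_add[OF f_weakly_convex_x
        strongly_convex_on_norm_square[of X r1 z]], where c="- (r2 / 2 * (norm (y - v))\<^sup>2)"]
  by (simp add: Fpx_def)

lemma F_strongly_concave_y: "x \<in> X \<Longrightarrow> strongly_convex_on Y (r2 - Ly) (\<lambda>y. - F x y z v)"
  using strongly_convex_on_add_const[OF strongly_convex_on_add[OF f_weakly_concave_y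
        strongly_convex_on_norm_square[of Y r2 v]], where c="- (r1 / 2 * (norm (x - z))\<^sup>2)"]
  by (simp add: Fpx_def algebra_simps)

lemma xyzv_argmin:
  assumes "y \<in> Y"
  shows "xyzv X f r1 r2 y z v \<in> X \<and> (\<forall>x'\<in>X. F (xyzv X f r1 r2 y z v) y z v \<le> F x' y z v)"
  unfolding xyzv_def
  using strongly_convex_on_the_argmin[OF X(3,1,2) F_continuous_on_x F_strongly_convex_x[OF assms]] r1
  by simp

lemma yxzv_argmax:
  assumes "x \<in> X"
  shows "yxzv Y f r1 r2 x z v \<in> Y \<and> (\<forall>y'\<in>Y. F x y' z v \<le> F x (yxzv Y f r1 r2 x z v) z v)"
proof -
  have "yxzv Y f r1 r2 x z v = (THE y. y \<in> Y \<and> (\<forall>y'\<in>Y. - F x y z v \<le> - F x y' z v))"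
    by (simp only: yxzv_def neg_le_iff_le)
  with strongly_convex_on_the_argmin[OF Y(3,1,2) continuous_on_minus[OF F_continuous_on_y]
        F_strongly_concave_y[OF assms]] r2_gt_Ly
  show ?thesis by simp
qed

lemma hfun_strongly_convex: "strongly_convex_on X (r1 - Lx) (\<lambda>x. hfun Y f r1 r2 x z v)"
  unfolding hfun_def
  by (intro strongly_convex_on_SUP X Y F_strongly_convex_x bdd_image_compact F_continuous_on_y)

lemma hfun_continuous: "continuous_on X (\<lambda>x. hfun Y f r1 r2 x z v)"
  unfolding hfun_def
  by (intro continuous_on_SUP_compact X Y continuous_on_subset[OF F_continuous]) simp

lemma xzv_argmin:
  "xzv X Y f r1 r2 z v \<in> X \<and> (\<forall>x'\<in>X. hfun Y f r1 r2 (xzv X Y f r1 r2 z v) z v \<le> hfun Y f r1 r2 x' z v)"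
  unfolding xzv_def
  using strongly_convex_on_the_argmin[OF X(3,1,2) hfun_continuous hfun_strongly_convex] r1 by simp

lemma hfun_shift:
  assumes "x \<in> X"
  shows "hfun Y f r1 r2 x z v = r1 / 2 * ((norm (x - z))\<^sup>2 - (norm (x - z'))\<^sup>2) + hfun Y f r1 r2 x z' v"
proof -
  have "F x y z v = r1 / 2 * ((norm (x - z))\<^sup>2 - (norm (x - z'))\<^sup>2) + F x y z' v" for y
    unfolding Fpx_def by (simp add: field_simps)
  then show ?thesis
    unfolding hfun_def by (simp add: Sup_add_eq bdd_image_compact F_continuous_on_y Y)
qed

lemma neg_dfun_eq_SUP:
  assumes "y \<in> Y"
  shows "- dfun X f r1 r2 y z v = (SUP x\<in>X. - F x y z v)"
  unfolding dfun_def by (intro uminus_cINF bdd_image_compact X F_continuous_on_x)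

lemma dfun_strongly_concave: "strongly_convex_on Y (r2 - Ly) (\<lambda>y. - dfun X f r1 r2 y z v)"
proof (rule strongly_convex_on_cong[OF _ Y(2) neg_dfun_eq_SUP[symmetric]])
  show "strongly_convex_on Y (r2 - Ly) (\<lambda>y. SUP x\<in>X. - F x y z v)"
    by (intro strongly_convex_on_SUP Y X F_strongly_concave_y bdd_image_compact
        continuous_on_minus F_continuous_on_x)
qed

lemma dfun_continuous: "continuous_on Y (\<lambda>y. - dfun X f r1 r2 y z v)"
proof (rule continuous_on_cong[THEN iffD1, OF refl neg_dfun_eq_SUP[symmetric]])
  show "continuous_on Y (\<lambda>y. SUP x\<in>X. - F x y z v)"
  proof (intro continuous_on_SUP_compact X Y continuous_on_minus)
    show "continuous_on (Y \<times> X) (\<lambda>p. F (snd p) (fst p) z v)"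
      using continuous_on_compose2[OF F_continuous[of z v], of _ "\<lambda>p. (snd p, fst p)"]
      by (simp add: continuous_intros)
  qed
qed

lemma yzv_argmax:
  "yzv X Y f r1 r2 z v \<in> Y \<and> (\<forall>y'\<in>Y. dfun X f r1 r2 y' z v \<le> dfun X f r1 r2 (yzv X Y f r1 r2 z v) z v)"
proof -
  have "yzv X Y f r1 r2 z v = (THE y. y \<in> Y \<and> (\<forall>y'\<in>Y. - dfun X f r1 r2 y z v \<le> - dfun X f r1 r2 y' z v))"
    by (simp only: yzv_def neg_le_iff_le)
  with strongly_convex_on_the_argmin[OF Y(3,1,2) dfun_continuous dfun_strongly_concave] r2_gt_Ly
  show ?thesis by simp
qed

lemma dfun_eq_F_xyzv:
  assumes "y \<in> Y"
  shows "dfun X f r1 r2 y z v = F (xyzv X f r1 r2 y z v) y z v"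
  unfolding dfun_def using xyzv_argmin[OF assms] by (intro cInf_eq_minimum) auto

lemma dfun_le_F:
  assumes "y \<in> Y" "x \<in> X"
  shows "dfun X f r1 r2 y z v \<le> F x y z v"
  unfolding dfun_def by (intro cINF_lower bdd_image_compact X F_continuous_on_x assms)

lemma F_increment_x:
  assumes "a \<in> X" "b \<in> X" "y \<in> Y" "y' \<in> Y"
  shows "(F b y z v - F b y' z' v') - (F a y z v - F a y' z' v')
    \<le> (Ly * norm (y - y') + r1 * norm (z - z')) * norm (a - b)"
proof -
  have "(F b y z v - F b y' z' v') - (F a y z v - F a y' z' v')
      = (f b y - f a y - f b y' + f a y')
        + r1 / 2 * (((norm (b - z))\<^sup>2 - (norm (b - z'))\<^sup>2) - ((norm (a - z))\<^sup>2 - (norm (a - z'))\<^sup>2))"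
    by (simp add: Fpx_def algebra_simps)
  also have "\<dots> \<le> Ly * norm (b - a) * norm (y - y') + r1 / 2 * (2 * norm (b - a) * norm (z - z'))"
    using mixed_difference_le[OF assms] norm_square_cross_difference_le[of b z z' a] r1 L_nonneg
    by (intro add_mono mult_left_mono) auto
  finally show ?thesis by (simp add: norm_minus_commute algebra_simps)
qed

lemma F_increment_y:
  assumes "a \<in> Y" "b \<in> Y" "x \<in> X" "x' \<in> X"
  shows "(- F x b z v - - F x' b z v') - (- F x a z v - - F x' a z v')
    \<le> (Ly * norm (x - x') + r2 * norm (v - v')) * norm (a - b)"
proof -
  have "(- F x b z v - - F x' b z v') - (- F x a z v - - F x' a z v')
      = - (f x b - f x' b - f x a + f x' a)
        + r2 / 2 * (((norm (b - v))\<^sup>2 - (norm (b - v'))\<^sup>2) - ((norm (a - v))\<^sup>2 - (norm (a - v'))\<^sup>2))"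
    by (simp add: Fpx_def algebra_simps)
  also have "\<dots> \<le> Ly * norm (x - x') * norm (b - a) + r2 / 2 * (2 * norm (b - a) * norm (v - v'))"
    using mixed_difference_le[OF assms(4,3,2,1)] norm_square_cross_difference_le[of b v v' a] r2_gt_Ly L_nonneg
    by (intro add_mono mult_left_mono) auto
  finally show ?thesis by (simp add: norm_minus_commute algebra_simps)
qed

lemma xyzv_dist:
  assumes "y \<in> Y" "y' \<in> Y"
  shows "(r1 - Lx) * norm (xyzv X f r1 r2 y z v - xyzv X f r1 r2 y' z' v')
    \<le> Ly * norm (y - y') + r1 * norm (z - z')"
proof (rule strongly_convex_on_argmin_dist[OF F_strongly_convex_x[OF assms(1)]
      F_strongly_convex_x[OF assms(2)] X(2)])
  let ?a = "xyzv X f r1 r2 y z v" and ?b = "xyzv X f r1 r2 y' z' v'"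
  show "(F ?b y z v - F ?b y' z' v') - (F ?a y z v - F ?a y' z' v')
      \<le> (Ly * norm (y - y') + r1 * norm (z - z')) * norm (?a - ?b)"
    using xyzv_argmin assms by (intro F_increment_x) auto
qed (use xyzv_argmin assms r1 L_nonneg in auto)

lemma yxzv_dist:
  assumes "x \<in> X" "x' \<in> X"
  shows "(r2 - Ly) * norm (yxzv Y f r1 r2 x z v - yxzv Y f r1 r2 x' z v')
    \<le> Ly * norm (x - x') + r2 * norm (v - v')"
proof (rule strongly_convex_on_argmin_dist[OF F_strongly_concave_y[OF assms(1)]
      F_strongly_concave_y[OF assms(2)] Y(2)])
  let ?a = "yxzv Y f r1 r2 x z v" and ?b = "yxzv Y f r1 r2 x' z v'"
  show "(- F x ?b z v - - F x' ?b z v') - (- F x ?a z v - - F x' ?a z v')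
      \<le> (Ly * norm (x - x') + r2 * norm (v - v')) * norm (?a - ?b)"
    using yxzv_argmax assms by (intro F_increment_y) auto
qed (use yxzv_argmax assms r2_gt_Ly L_nonneg in auto)

lemma xzv_dist: "(r1 - Lx) * norm (xzv X Y f r1 r2 z v - xzv X Y f r1 r2 z' v) \<le> r1 * norm (z - z')"
proof (rule strongly_convex_on_argmin_dist[OF hfun_strongly_convex hfun_strongly_convex X(2)])
  let ?x = "xzv X Y f r1 r2 z v" and ?x' = "xzv X Y f r1 r2 z' v"
  have "(hfun Y f r1 r2 ?x' z v - hfun Y f r1 r2 ?x' z' v) - (hfun Y f r1 r2 ?x z v - hfun Y f r1 r2 ?x z' v)
      = r1 / 2 * (((norm (?x' - z))\<^sup>2 - (norm (?x' - z'))\<^sup>2) - ((norm (?x - z))\<^sup>2 - (norm (?x - z'))\<^sup>2))"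
    using hfun_shift[of ?x z v z'] hfun_shift[of ?x' z v z'] xzv_argmin by (simp add: algebra_simps)
  also have "\<dots> \<le> r1 / 2 * (2 * norm (?x' - ?x) * norm (z - z'))"
    using norm_square_cross_difference_le[of ?x' z z' ?x] r1 L_nonneg by (intro mult_left_mono) auto
  finally show "(hfun Y f r1 r2 ?x' z v - hfun Y f r1 r2 ?x' z' v) - (hfun Y f r1 r2 ?x z v - hfun Y f r1 r2 ?x z' v)
      \<le> r1 * norm (z - z') * norm (?x - ?x')"
    by (simp add: norm_minus_commute mult_ac)
qed (use xzv_argmin r1 L_nonneg in auto)

lemma yzv_dist_square:
  fixes z z' :: 'n and v v' :: 'd
  defines "y1 \<equiv> yzv X Y f r1 r2 z v" and "y2 \<equiv> yzv X Y f r1 r2 z' v'"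
  shows "(r2 - Ly) * (norm (y1 - y2))\<^sup>2
    \<le> r1 * norm (xyzv X f r1 r2 y1 z' v' - xyzv X f r1 r2 y2 z v) * norm (z - z')
      + r2 * norm (y1 - y2) * norm (v - v')"
proof -
  define x12 where "x12 = xyzv X f r1 r2 y1 z' v'"
  define x21 where "x21 = xyzv X f r1 r2 y2 z v"
  have y: "y1 \<in> Y" "y2 \<in> Y" using yzv_argmax by (simp_all add: y1_def y2_def)
  have x: "x12 \<in> X" "x21 \<in> X" using xyzv_argmin y by (simp_all add: x12_def x21_def)
  have "(r2 - Ly) * (norm (y1 - y2))\<^sup>2
      \<le> (- dfun X f r1 r2 y2 z v - - dfun X f r1 r2 y2 z' v') - (- dfun X f r1 r2 y1 z v - - dfun X f r1 r2 y1 z' v')"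
  proof (rule strongly_convex_on_argmin_dist_square[OF dfun_strongly_concave dfun_strongly_concave Y(2) _ y])
    show "\<forall>u\<in>Y. - dfun X f r1 r2 y1 z v \<le> - dfun X f r1 r2 u z v"
      "\<forall>u\<in>Y. - dfun X f r1 r2 y2 z' v' \<le> - dfun X f r1 r2 u z' v'"
      using yzv_argmax by (simp_all add: y1_def y2_def)
  qed (use r2_gt_Ly in simp)
  \<comment> \<open>Bounding each \<open>d\<close> by \<open>F\<close> at the same inner point makes the \<open>f\<close> terms cancel.\<close>
  also have "\<dots> \<le> (F x21 y2 z' v' - F x21 y2 z v) - (F x12 y1 z' v' - F x12 y1 z v)"
    using dfun_eq_F_xyzv[OF y(2), of z v, folded x21_def] dfun_le_F[OF y(2) x(2), of z' v']
      dfun_le_F[OF y(1) x(1), of z v] dfun_eq_F_xyzv[OF y(1), of z' v', folded x12_def]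
    by linarith
  also have "\<dots> = r1 / 2 * (((norm (x21 - z'))\<^sup>2 - (norm (x21 - z))\<^sup>2) - ((norm (x12 - z'))\<^sup>2 - (norm (x12 - z))\<^sup>2))
      + r2 / 2 * (((norm (y1 - v'))\<^sup>2 - (norm (y1 - v))\<^sup>2) - ((norm (y2 - v'))\<^sup>2 - (norm (y2 - v))\<^sup>2))"
    by (simp add: Fpx_def algebra_simps)
  also have "\<dots> \<le> r1 / 2 * (2 * norm (x21 - x12) * norm (z' - z)) + r2 / 2 * (2 * norm (y1 - y2) * norm (v' - v))"
    using norm_square_cross_difference_le[of x21 z' z x12] norm_square_cross_difference_le[of y1 v' v y2]
      r1 r2_gt_Ly L_nonneg
    by (intro add_mono mult_left_mono) auto
  finally show ?thesis by (simp add: x12_def x21_def norm_minus_commute mult_ac)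
qed

abbreviation (input) \<sigma>1 :: real where "\<sigma>1 \<equiv> (Ly + r1 - Lx) / (r1 - Lx)"
abbreviation (input) \<sigma>2 :: real where "\<sigma>2 \<equiv> r1 / (r1 - Lx)"
abbreviation (input) \<sigma>3 :: real where "\<sigma>3 \<equiv> r1 * \<sigma>1 / (r2 - Ly) + \<sigma>2 / \<sigma>1"
abbreviation (input) \<sigma>4 :: real where "\<sigma>4 \<equiv> (Lx + r2 - Ly) / (r2 - Ly)"
abbreviation (input) \<sigma>5 :: real where "\<sigma>5 \<equiv> r2 / (r2 - Ly)"

lemma xyzv_lipschitz_y:
  assumes "y \<in> Y" "y' \<in> Y"
  shows "norm (xyzv X f r1 r2 y' z v - xyzv X f r1 r2 y z v) \<le> \<sigma>1 * norm (y' - y)"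
proof (rule le_divide_mult_of_mult_le)
  show "(r1 - Lx) * norm (xyzv X f r1 r2 y' z v - xyzv X f r1 r2 y z v) \<le> Ly * norm (y' - y)"
    using xyzv_dist[OF assms(2,1), of z v z v] by simp
qed (use r1 in auto)

lemma xyzv_lipschitz_z:
  assumes "y \<in> Y"
  shows "norm (xyzv X f r1 r2 y z' v - xyzv X f r1 r2 y z v) \<le> \<sigma>2 * norm (z - z')"
proof (rule le_divide_mult_of_mult_le)
  show "(r1 - Lx) * norm (xyzv X f r1 r2 y z' v - xyzv X f r1 r2 y z v) \<le> r1 * norm (z - z')"
    using xyzv_dist[OF assms assms, of z' v z v] by (simp add: norm_minus_commute)
qed (use r1 in auto)

lemma xzv_lipschitz: "norm (xzv X Y f r1 r2 z' v - xzv X Y f r1 r2 z v) \<le> \<sigma>2 * norm (z - z')"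
proof (rule le_divide_mult_of_mult_le)
  show "(r1 - Lx) * norm (xzv X Y f r1 r2 z' v - xzv X Y f r1 r2 z v) \<le> r1 * norm (z - z')"
    using xzv_dist[of z' v z] by (simp add: norm_minus_commute)
qed (use r1 in auto)

lemma yxzv_lipschitz_x:
  assumes "x \<in> X" "x' \<in> X"
  shows "norm (yxzv Y f r1 r2 x z v - yxzv Y f r1 r2 x' z v) \<le> \<sigma>4 * norm (x - x')"
proof (rule le_divide_mult_of_mult_le)
  show "(r2 - Ly) * norm (yxzv Y f r1 r2 x z v - yxzv Y f r1 r2 x' z v) \<le> Ly * norm (x - x')"
    using yxzv_dist[OF assms, of z v v] by simp
qed (use r2 r2_gt_Ly L_nonneg in auto)

lemma yxzv_lipschitz_v:
  assumes "x \<in> X"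
  shows "norm (yxzv Y f r1 r2 x z v - yxzv Y f r1 r2 x z v') \<le> \<sigma>5 * norm (v - v')"
proof (rule le_divide_mult_of_mult_le)
  show "(r2 - Ly) * norm (yxzv Y f r1 r2 x z v - yxzv Y f r1 r2 x z v') \<le> r2 * norm (v - v')"
    using yxzv_dist[OF assms assms, of z v v'] by simp
qed (use r2_gt_Ly in auto)

lemma yzv_lipschitz_v: "norm (yzv X Y f r1 r2 z v - yzv X Y f r1 r2 z v') \<le> \<sigma>5 * norm (v - v')"
proof (rule le_divide_mult_of_mult_le)
  have "(r2 - Ly) * (norm (yzv X Y f r1 r2 z v - yzv X Y f r1 r2 z v'))\<^sup>2
      \<le> (r2 * norm (v - v')) * norm (yzv X Y f r1 r2 z v - yzv X Y f r1 r2 z v')"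
    using yzv_dist_square[of z v z v'] by (simp add: mult_ac)
  then show "(r2 - Ly) * norm (yzv X Y f r1 r2 z v - yzv X Y f r1 r2 z v') \<le> r2 * norm (v - v')"
    using r2_gt_Ly L_nonneg by (intro mult_le_of_mult_square_le[OF norm_ge_zero]) simp_all
qed (use r2_gt_Ly in auto)

text \<open>The inner minimizer distance left over by \<open>yzv_dist_square\<close> is bounded by (i) and (ii),
which turns that estimate into a quadratic inequality for \<open>|y(z,v) - y(z',v)|\<close>.\<close>
lemma yzv_lipschitz_z: "norm (yzv X Y f r1 r2 z v - yzv X Y f r1 r2 z' v) \<le> \<sigma>3 * norm (z - z')"
proof -
  define y1 where "y1 = yzv X Y f r1 r2 z v"
  define y2 where "y2 = yzv X Y f r1 r2 z' v"
  define t where "t = norm (y1 - y2)"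
  define \<delta> where "\<delta> = norm (z - z')"
  define \<xi> where "\<xi> = norm (xyzv X f r1 r2 y1 z' v - xyzv X f r1 r2 y2 z v)"
  have y: "y1 \<in> Y" "y2 \<in> Y" using yzv_argmax by (simp_all add: y1_def y2_def)
  have pos: "0 < r1 - Lx" "0 < r2 - Ly" "0 < \<sigma>1" "0 \<le> t" "0 \<le> \<delta>"
    using r1 r2_gt_Ly L_nonneg by (simp_all add: t_def \<delta>_def)
  have "(r1 - Lx) * \<xi> \<le> Ly * t + r1 * \<delta>"
    using xyzv_dist[OF y(2,1), of z v z' v] by (simp add: \<xi>_def t_def \<delta>_def norm_minus_commute)
  also have "\<dots> \<le> (Ly + r1 - Lx) * t + r1 * \<delta>"
    using pos mult_right_mono[of Lx r1 t] by (simp add: algebra_simps)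
  also have "\<dots> = (r1 - Lx) * (\<sigma>1 * t + \<sigma>2 * \<delta>)"
    using pos(1) by (simp add: distrib_left)
  finally have \<xi>_le: "\<xi> \<le> \<sigma>1 * t + \<sigma>2 * \<delta>"
    using pos(1) by simp
  have "(r2 - Ly) * t\<^sup>2 \<le> r1 * \<xi> * \<delta>"
    using yzv_dist_square[of z v z' v] by (simp add: y1_def y2_def t_def \<delta>_def \<xi>_def)
  also have "\<dots> \<le> r1 * (\<sigma>1 * t + \<sigma>2 * \<delta>) * \<delta>"
    using \<xi>_le pos r1 L_nonneg by (intro mult_right_mono mult_left_mono) auto
  finally have "t\<^sup>2 \<le> r1 * (\<sigma>1 * t + \<sigma>2 * \<delta>) * \<delta> / (r2 - Ly)"
    using pos(2) by (simp add: pos_le_divide_eq mult.commute)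
  also have "\<dots> = (r1 * \<sigma>1 / (r2 - Ly)) * t * \<delta> + (r1 * \<sigma>1 / (r2 - Ly)) * (\<sigma>2 / \<sigma>1) * \<delta>\<^sup>2"
  proof -
    have expand: "r1 * (s1 * t + s2 * \<delta>) * \<delta> / m = (r1 * s1 / m) * t * \<delta> + (r1 * s1 / m) * (s2 / s1) * \<delta>\<^sup>2"
      if "s1 \<noteq> 0" for s1 s2 m :: real
      using that by (simp add: field_simps power2_eq_square add_divide_distrib)
    show ?thesis by (rule expand) (use pos(3) in linarith)
  qed
  finally have "t \<le> (r1 * \<sigma>1 / (r2 - Ly) + \<sigma>2 / \<sigma>1) * \<delta>"
    using pos r1 L_nonneg by (intro quadratic_le_imp_le) auto
  then show ?thesis by (simp add: y1_def y2_def t_def \<delta>_def)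
qed

end

theorem lemma2:
  fixes X :: "'n::euclidean_space set" and Y :: "'d::euclidean_space set"
    and f :: "'n \<Rightarrow> 'd \<Rightarrow> real"
    and gx :: "'n \<Rightarrow> 'd \<Rightarrow> 'n" and gy :: "'n \<Rightarrow> 'd \<Rightarrow> 'd"
    and Lx Ly r1 r2 :: real
    and x x' z z' :: 'n and y y' v v' :: 'd
  assumes X: "X \<noteq> {}" "convex X" "compact X"
    and Y: "Y \<noteq> {}" "convex Y" "compact Y"
    and deriv: "\<And>a b. ((\<lambda>p. f (fst p) (snd p)) has_derivative
                   (\<lambda>p. gx a b \<bullet> fst p + gy a b \<bullet> snd p)) (at (a, b))"
    and cont: "continuous_on UNIV (\<lambda>p. gx (fst p) (snd p))"
              "continuous_on UNIV (\<lambda>p. gy (fst p) (snd p))"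
    and Lpos: "Lx > 0" "Ly > 0"
    and Lipx: "\<And>a a' b b'. a \<in> X \<Longrightarrow> a' \<in> X \<Longrightarrow> b \<in> Y \<Longrightarrow> b' \<in> Y \<Longrightarrow>
                 norm (gx a b - gx a' b') \<le> Lx * (norm (a - a') + norm (b - b'))"
    and Lipy: "\<And>a a' b b'. a \<in> X \<Longrightarrow> a' \<in> X \<Longrightarrow> b \<in> Y \<Longrightarrow> b' \<in> Y \<Longrightarrow>
                 norm (gy a b - gy a' b') \<le> Ly * (norm (a - a') + norm (b - b'))"
    and r1: "r1 > Lx"
    and r2: "r2 > (Ly / (r1 - Lx) + 2) * Ly"
    and pts: "x \<in> X" "x' \<in> X" "y \<in> Y" "y' \<in> Y"
  shows
    "let \<sigma>1 = (Ly + r1 - Lx) / (r1 - Lx);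
         \<sigma>2 = r1 / (r1 - Lx);
         \<sigma>3 = r1 * \<sigma>1 / (r2 - Ly) + \<sigma>2 / \<sigma>1;
         \<sigma>4 = (Lx + r2 - Ly) / (r2 - Ly);
         \<sigma>5 = r2 / (r2 - Ly)
     in norm (xyzv X f r1 r2 y' z v - xyzv X f r1 r2 y z v) \<le> \<sigma>1 * norm (y' - y)
      \<and> norm (xyzv X f r1 r2 y z' v - xyzv X f r1 r2 y z v) \<le> \<sigma>2 * norm (z - z')
      \<and> norm (xzv X Y f r1 r2 z' v - xzv X Y f r1 r2 z v) \<le> \<sigma>2 * norm (z - z')
      \<and> norm (yzv X Y f r1 r2 z v - yzv X Y f r1 r2 z' v) \<le> \<sigma>3 * norm (z - z')
      \<and> norm (yxzv Y f r1 r2 x z v - yxzv Y f r1 r2 x' z v) \<le> \<sigma>4 * norm (x - x')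
      \<and> norm (yxzv Y f r1 r2 x z v - yxzv Y f r1 r2 x z v') \<le> \<sigma>5 * norm (v - v')
      \<and> norm (yzv X Y f r1 r2 z v - yzv X Y f r1 r2 z v') \<le> \<sigma>5 * norm (v - v')"
proof -
  have "2 * Ly < r2"
  proof -
    have "0 \<le> Ly / (r1 - Lx) * Ly" using Lpos r1 by simp
    then show ?thesis using r2 by (simp add: distrib_right)
  qed
  then interpret proximal_minimax X Y f gx gy Lx Ly r1 r2
    using X Y deriv Lpos Lipx Lipy r1 by unfold_locales auto
  show ?thesis
    unfolding Let_def
    by (intro conjI xyzv_lipschitz_y xyzv_lipschitz_z xzv_lipschitz yzv_lipschitz_z
        yxzv_lipschitz_x yxzv_lipschitz_v yzv_lipschitz_v pts)
qed

end
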